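(* Consider the SBBS with $d=2$ balls, error probability $\varepsilon\in[0,1]$ and any capacity $c\in\{1,2,\dots\}\cup\{\infty\}$, started with the two balls adjacent ($W_0=0$). Let $X$ be the bulk process, $X_0=0$, $X_{t+1}-X_t=\eta^{(2)}_t-\eta^{(1)}_t$. Then almost surely, for all $t\ge0$, $$W_t=X_t-\min_{0\le s\le t}X_s.$$
   Context: Stochastic box-ball system (SBBS). Fix an error probability $\varepsilon\in[0,1]$ and a capacity $c\in\{1,2,\dots\}\cup\{\infty\}$. A configuration is $\zeta\in\{0,1\}^{\mathbb N}$ with finitely many $1$'s (balls). The SBBS is driven as follows: at each time $t$ there are i.i.d. coins $\eta^{(1)}_t,\dots,\eta^{(d)}_t\sim\mathrm{Bernoulli}(1-\varepsilon)$ ($d$ = number of balls), independent over $t$. To produce $\zeta_{t+1}$ from $\zeta_t$, a carrier starts empty at site $1$ and scans sites $1,2,3,\dots$ in order: when it reaches the $i$-th ball (from the left) of $\zeta_t$ it picks it up iff $\eta_t^{(i)}=1$ and its current load is $<c$ (otherwise the ball stays); when it reaches an empty site while its load is $\ge1$, it drops one ball there (load decreases by $1$). The number $d$ of balls is conserved; with $d=2$ and ball positions $\zeta^{(1)}_t<\zeta^{(2)}_t$ the gap process is $W_t=\zeta^{(2)}_t-\zeta^{(1)}_t-1$. *)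

theory Defs
  imports "HOL-Probability.Probability" "HOL-Library.Extended_Nat"
begin

text \<open>Configurations: a finite prefix of sites 1,2,...,L as a bool list
(list index i corresponds to site i+1, True = ball); all sites beyond are empty.\<close>

text \<open>Arguments: capacity c, coins eta (eta i = coin of the
i-th ball from the left, i >= 1), index of next ball, current load, remaining sites.
After the listed sites, all sites are empty and the carrier drops one ball per site.\<close>
fun carry :: "enat \<Rightarrow> (nat \<Rightarrow> bool) \<Rightarrow> nat \<Rightarrow> nat \<Rightarrow> bool list \<Rightarrow> bool list" where
  "carry c eta i load [] = replicate load True"
| "carry c eta i load (b # bs) =
     (if b then
        (if eta i \<and> enat load < c then False # carry c eta (Suc i) (Suc load) bs
         else True # carry c eta (Suc i) load bs)
      else
        (if load \<ge> 1 then True # carry c eta i (load - 1) bs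
         else False # carry c eta i load bs))"

definition sbbs_step :: "enat \<Rightarrow> (nat \<Rightarrow> bool) \<Rightarrow> bool list \<Rightarrow> bool list" where
  "sbbs_step c eta z = carry c eta 1 0 z"

definition coins2 :: "bool \<times> bool \<Rightarrow> nat \<Rightarrow> bool" where
  "coins2 e i = (if i = 1 then fst e else if i = 2 then snd e else False)"

fun sbbs2 :: "enat \<Rightarrow> bool list \<Rightarrow> (bool \<times> bool) stream \<Rightarrow> nat \<Rightarrow> bool list" where
  "sbbs2 c z0 \<omega> 0 = z0"
| "sbbs2 c z0 \<omega> (Suc t) = sbbs_step c (coins2 (\<omega> !! t)) (sbbs2 c z0 \<omega> t)"

definition ball_pos :: "bool list \<Rightarrow> nat list" where
  "ball_pos z = filter (\<lambda>k. z ! (k - 1)) [1..<Suc (length z)]"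

definition gap :: "bool list \<Rightarrow> int" where
  "gap z = int (ball_pos z ! 1) - int (ball_pos z ! 0) - 1"

definition bulk :: "(bool \<times> bool) stream \<Rightarrow> nat \<Rightarrow> int" where
  "bulk \<omega> t = (\<Sum>s<t. of_bool (snd (\<omega> !! s)) - of_bool (fst (\<omega> !! s)))"

definition coin_space :: "real \<Rightarrow> (bool \<times> bool) stream measure" where
  "coin_space eps = stream_space (measure_pmf
      (pair_pmf (bernoulli_pmf (1 - eps)) (bernoulli_pmf (1 - eps))))"

end

theory Submission
  imports Defs
begin

text \<open>Two balls always keep the shape: empty sites, a ball, w empty sites, a ball, empty
sites. One carrier sweep changes w by the second coin minus the first, except when the balls
are adjacent and only the first one is picked up (the second stays, because of its coin or
because the capacity is 1): then the first ball is dropped right behind the second and w stays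
0. So w follows Lindley's recursion W' = max 0 (W + \<Delta>X), i.e. it is the bulk walk X reflected
at 0, which from W = 0 is X - min X. This holds for every coin sequence, not only almost
surely.\<close>

lemma carry_replicate_False:
  "carry c eta i L (replicate n False @ bs) =
     replicate (min L n) True @ replicate (n - L) False @ carry c eta i (L - n) bs"
proof (induction n arbitrary: L)
  case (Suc n)
  then show ?case by (cases L) (simp_all add: replicate_app_Cons_same)
qed simp

corollary carry_drop_load:
  "carry c eta i L (replicate n False) = replicate L True @ replicate (n - L) False"
  using carry_replicate_False[of c eta i L n "[]"]
  by (simp add: min_def replicate_add[symmetric])

definition two_balls :: "nat \<Rightarrow> nat \<Rightarrow> nat \<Rightarrow> bool list" where
  "two_balls a w k = replicate a False @ True # replicate w False @ True # replicate k False"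

text \<open>The truncated subtraction on \<^typ>\<open>nat\<close> is exactly the reflection at 0.\<close>

lemma sbbs_step_two_balls:
  assumes "c \<ge> 1"
  shows "\<exists>a' k'. sbbs_step c (coins2 (e1, e2)) (two_balls a w k)
                  = two_balls a' (w + of_bool e2 - of_bool e1) k'"
proof -
  define a' where "a' = a + of_bool e1 + of_bool (w = 0 \<and> e1 \<and> e2 \<and> 1 < c)"
  define w' where "w' = w + of_bool e2 - of_bool e1"
  have "enat 0 < c"
    using assms by (cases c) (auto simp: one_enat_def)
  then have "sbbs_step c (coins2 (e1, e2)) (two_balls a w k)
               = two_balls a' w' (a + w + k - a' - w')"
    unfolding sbbs_step_def two_balls_def a'_def w'_def
    by (cases w; cases e1; cases e2; cases "1 < c")
       (simp_all add: carry_replicate_False carry_drop_load replicate_app_Cons_same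
          coins2_def one_enat_def)
  then show ?thesis
    unfolding w'_def by blast
qed

fun ball_sites :: "nat \<Rightarrow> bool list \<Rightarrow> nat list" where
  "ball_sites n [] = []"
| "ball_sites n (b # bs) = (if b then n # ball_sites (Suc n) bs else ball_sites (Suc n) bs)"

lemma filter_nth_upt_eq_ball_sites:
  "filter (\<lambda>j. z ! (j - n)) [n..<n + length z] = ball_sites n z"
proof (induction z arbitrary: n)
  case (Cons b z)
  have "filter (\<lambda>j. (b # z) ! (j - n)) [Suc n..<Suc n + length z]
      = filter (\<lambda>j. z ! (j - Suc n)) [Suc n..<Suc n + length z]"
  proof (rule filter_cong[OF refl])
    fix j assume "j \<in> set [Suc n..<Suc n + length z]"
    then have "j - n = Suc (j - Suc n)" by auto
    then show "(b # z) ! (j - n) = z ! (j - Suc n)" by simp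
  qed
  moreover have "[n..<n + length (b # z)] = n # [Suc n..<Suc n + length z]"
    by (simp add: upt_conv_Cons del: upt_Suc)
  ultimately show ?case
    using Cons.IH[of "Suc n"] by (cases b) (simp_all del: upt_Suc)
qed simp

lemma ball_pos_eq_ball_sites: "ball_pos z = ball_sites 1 z"
  using filter_nth_upt_eq_ball_sites[of z 1] by (simp add: ball_pos_def)

lemma ball_sites_replicate_False: "ball_sites n (replicate a False @ bs) = ball_sites (n + a) bs"
  by (induction a arbitrary: n) auto

lemma gap_two_balls: "gap (two_balls a w k) = int w"
  using ball_sites_replicate_False[of _ _ "[]"]
  by (simp add: gap_def ball_pos_eq_ball_sites two_balls_def ball_sites_replicate_False)

lemma Min_image_atLeastAtMost_Suc:
  fixes X :: "nat \<Rightarrow> 'a::linorder"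
  shows "Min (X ` {0..Suc t}) = min (Min (X ` {0..t})) (X (Suc t))"
  by (simp add: atLeast0_atMost_Suc Min_insert min.commute)

lemma reflected_walk_Suc:
  fixes X :: "nat \<Rightarrow> 'a::linordered_ab_group_add"
  shows "X (Suc t) - Min (X ` {0..Suc t}) = max 0 (X t - Min (X ` {0..t}) + (X (Suc t) - X t))"
  by (simp add: Min_image_atLeastAtMost_Suc max_def min_def algebra_simps)

lemma bulk_Suc:
  "bulk \<omega> (Suc t) = bulk \<omega> t + of_bool (snd (\<omega> !! t)) - of_bool (fst (\<omega> !! t))"
  by (simp add: bulk_def)

lemma sbbs2_two_balls_gap_reflected:
  assumes "c \<ge> 1"
  shows "\<exists>a k. sbbs2 c (two_balls a\<^sub>0 0 k\<^sub>0) \<omega> t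
                = two_balls a (nat (bulk \<omega> t - Min (bulk \<omega> ` {0..t}))) k"
proof (induction t)
  case 0
  show ?case by (auto simp: bulk_def)
next
  case (Suc t)
  define W where "W s = bulk \<omega> s - Min (bulk \<omega> ` {0..s})" for s
  obtain a k where IH: "sbbs2 c (two_balls a\<^sub>0 0 k\<^sub>0) \<omega> t = two_balls a (nat (W t)) k"
    using Suc.IH unfolding W_def by blast
  obtain e1 e2 where coins: "\<omega> !! t = (e1, e2)"
    by fastforce
  have "W t \<ge> 0"
    unfolding W_def by (simp add: Min_le)
  have "bulk \<omega> (Suc t) - bulk \<omega> t = of_bool e2 - of_bool e1"
    by (simp add: bulk_Suc coins)
  then have "W (Suc t) = max 0 (W t + (of_bool e2 - of_bool e1))"
    using reflected_walk_Suc[of "bulk \<omega>" t] by (simp only: W_def)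
  then have "nat (W (Suc t)) = nat (W t) + of_bool e2 - of_bool e1"
    using \<open>W t \<ge> 0\<close> by (cases e1; cases e2) (simp_all add: nat_add_distrib)
  moreover obtain a' k' where
    "sbbs_step c (coins2 (e1, e2)) (two_balls a (nat (W t)) k)
       = two_balls a' (nat (W t) + of_bool e2 - of_bool e1) k'"
    using sbbs_step_two_balls[OF assms] by blast
  ultimately have
    "sbbs2 c (two_balls a\<^sub>0 0 k\<^sub>0) \<omega> (Suc t) = two_balls a' (nat (W (Suc t))) k'"
    by (simp only: sbbs2.simps IH coins)
  then show ?case
    unfolding W_def by blast
qed

theorem mainTheorem10:
  fixes eps :: real and c :: enat and p :: nat
  assumes "0 \<le> eps" and "eps \<le> 1" and "c \<ge> 1" and "p \<ge> 1"
  shows "AE \<omega> in coin_space eps.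
           \<forall>t. gap (sbbs2 c (replicate (p - 1) False @ [True, True]) \<omega> t)
               = bulk \<omega> t - Min (bulk \<omega> ` {0..t})"
proof (intro AE_I2 allI)
  fix \<omega> t
  obtain a k where "sbbs2 c (two_balls (p - 1) 0 0) \<omega> t
                      = two_balls a (nat (bulk \<omega> t - Min (bulk \<omega> ` {0..t}))) k"
    using sbbs2_two_balls_gap_reflected[OF assms(3)] by blast
  moreover have "replicate (p - 1) False @ [True, True] = two_balls (p - 1) 0 0"
    by (simp add: two_balls_def)
  moreover have "Min (bulk \<omega> ` {0..t}) \<le> bulk \<omega> t"
    by (rule Min_le) auto
  ultimately show "gap (sbbs2 c (replicate (p - 1) False @ [True, True]) \<omega> t)
                     = bulk \<omega> t - Min (bulk \<omega> ` {0..t})"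
    by (simp add: gap_two_balls)
qed

end
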